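(* Let $A$ be a set. The assignment on objects $(X,S)\mapsto (A\times X,S)$ and on morphisms $\mathcal{H}\mapsto (A\rightarrow\mathcal{H})$ defines a functor $A\rightarrow\_ : \mathsf{Open}\rightarrow\mathsf{Open}$.
   Context: An open game $\mathcal{G}:(X,S)\rightarrow(Y,R)$ (for sets $X,Y,R,S$) consists of a set $\Sigma_\mathcal{G}$ of strategy profiles, a play function $P_\mathcal{G}:\Sigma_\mathcal{G}\rightarrow(X\rightarrow Y)$, a coutility function $C_\mathcal{G}:\Sigma_\mathcal{G}\rightarrow(X\times R\rightarrow S)$, and an equilibrium function $E_\mathcal{G}:X\times(Y\rightarrow R)\rightarrow\mathcal{P}\Sigma_\mathcal{G}$ (written $E_\mathcal{G}\,x\,k$). The category $\mathsf{Open}$ has as objects pairs of sets $(X,S)$ and as morphisms $(X,S)\rightarrow(Y,R)$ open games, considered up to isomorphism of strategy sets (a bijection of strategy sets compatible with play, coutility and equilibrium functions). The identity on $(X,S)$ has strategy set $\mathbf{1}$, play function the identity on $X$, coutility $(x,s)\mapsto s$, and equilibrium function returning all strategies. The composite of $\mathcal{G}:(X,S)\rightarrow(Y,R)$ and $\mathcal{H}:(Y,R)\rightarrow(Z,Q)$ is $\mathcal{H}\circ\mathcal{G}:(X,S)\rightarrow(Z,Q)$ with strategies $\Sigma_\mathcal{G}\times\Sigma_\mathcal{H}$, play $P\,(\sigma_1,\sigma_2)\,x=P_\mathcal{H}\,\sigma_2\,(P_\mathcal{G}\,\sigma_1\,x)$, coutility $C\,(\sigma_1,\sigma_2)\,(x,q)=C_\mathcal{G}\,\sigma_1\,(x,\,C_\mathcal{H}\,\sigma_2\,(P_\mathcal{G}\,\sigma_1\,x,\,q))$,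 and $(\sigma_1,\sigma_2)\in E_{\mathcal{H}\circ\mathcal{G}}\,x\,k$ iff $\sigma_1\in E_\mathcal{G}\,x\,k'$ where $k'\,y=C_\mathcal{H}\,\sigma_2\,(y,\,k(P_\mathcal{H}\,\sigma_2\,y))$, and $\sigma_2\in E_\mathcal{H}\,(P_\mathcal{G}\,\sigma'\,x)\,k$ for all $\sigma'\in\Sigma_\mathcal{G}$. For a set $A$ and a game $\mathcal{H}:(X,S)\rightarrow(Y,R)$ with strategies $\Sigma_\mathcal{H}$, the game $A\rightarrow\mathcal{H}:(A\times X,S)\rightarrow(A\times Y,R)$ has strategy set $A\rightarrow\Sigma_\mathcal{H}$ (functions $f:A\rightarrow\Sigma_\mathcal{H}$), play function $P\,f\,(a,x)=(a,\,P_\mathcal{H}\,(fa)\,x)$, coutility $C\,f\,((a,x),r)=C_\mathcal{H}\,(fa)\,(x,r)$, and equilibrium: $f\in E_{A\rightarrow\mathcal{H}}\,(a,x)\,k$ (for $k:A\times Y\rightarrow R$) iff for all $a'\in A$, $fa'\in E_\mathcal{H}\,x\,(k(a',\_))$. *)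

theory Defs
  imports "HOL-Library.FuncSet"
begin

text \<open>Object sets are carrier sets X, S, Y, R inside
  ambient types; the strategy set is a carrier set inside an ambient type 'g.\<close>

record ('g, 'x, 's, 'y, 'r) ogame =
  strat :: "'g set"
  play :: "'g \<Rightarrow> 'x \<Rightarrow> 'y"
  coutil :: "'g \<Rightarrow> 'x \<times> 'r \<Rightarrow> 's"
  equil :: "'x \<Rightarrow> ('y \<Rightarrow> 'r) \<Rightarrow> 'g set"

definition is_open_game ::
  "'x set \<Rightarrow> 's set \<Rightarrow> 'y set \<Rightarrow> 'r set \<Rightarrow> ('g, 'x, 's, 'y, 'r) ogame \<Rightarrow> bool" where
  "is_open_game X S Y R G \<longleftrightarrow>
     (\<forall>\<sigma>\<in>strat G. \<forall>x\<in>X. play G \<sigma> x \<in> Y) \<and>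
     (\<forall>\<sigma>\<in>strat G. \<forall>x\<in>X. \<forall>r\<in>R. coutil G \<sigma> (x, r) \<in> S) \<and>
     (\<forall>x\<in>X. \<forall>k\<in>Y \<rightarrow>\<^sub>E R. equil G x k \<subseteq> strat G)"

definition game_iso ::
  "'x set \<Rightarrow> 'y set \<Rightarrow> 'r set \<Rightarrow> ('g, 'x, 's, 'y, 'r) ogame \<Rightarrow> ('h, 'x, 's, 'y, 'r) ogame \<Rightarrow> bool" where
  "game_iso X Y R G H \<longleftrightarrow>
     (\<exists>f. bij_betw f (strat G) (strat H) \<and>
       (\<forall>\<sigma>\<in>strat G.
          (\<forall>x\<in>X. play H (f \<sigma>) x = play G \<sigma> x) \<and>
          (\<forall>x\<in>X. \<forall>r\<in>R. coutil H (f \<sigma>) (x, r) = coutil G \<sigma> (x, r)) \<and>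
          (\<forall>x\<in>X. \<forall>k\<in>Y \<rightarrow>\<^sub>E R. \<sigma> \<in> equil G x k \<longleftrightarrow> f \<sigma> \<in> equil H x k)))"

definition id_game :: "(unit, 'x, 's, 'x, 's) ogame" where
  "id_game = \<lparr> strat = {()}, play = (\<lambda>_ x. x), coutil = (\<lambda>_ (x, s). s),
               equil = (\<lambda>_ _. {()}) \<rparr>"

text \<open>Composite H \<circ> G of G : (X,S) -> (Y,R) and H : (Y,R) -> (Z,Q);
  the parameter Y is needed to form the continuation k' : Y -> R.\<close>
definition comp_game ::
  "'y set \<Rightarrow> ('g, 'x, 's, 'y, 'r) ogame \<Rightarrow> ('h, 'y, 'r, 'z, 'q) ogame
     \<Rightarrow> ('g \<times> 'h, 'x, 's, 'z, 'q) ogame" where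
  "comp_game Y G H = \<lparr>
     strat = strat G \<times> strat H,
     play = (\<lambda>(\<sigma>1, \<sigma>2) x. play H \<sigma>2 (play G \<sigma>1 x)),
     coutil = (\<lambda>(\<sigma>1, \<sigma>2) (x, q). coutil G \<sigma>1 (x, coutil H \<sigma>2 (play G \<sigma>1 x, q))),
     equil = (\<lambda>x k. {(\<sigma>1, \<sigma>2). \<sigma>1 \<in> strat G \<and> \<sigma>2 \<in> strat H \<and>
                 \<sigma>1 \<in> equil G x (\<lambda>y\<in>Y. coutil H \<sigma>2 (y, k (play H \<sigma>2 y))) \<and>
                 (\<forall>\<sigma>'\<in>strat G. \<sigma>2 \<in> equil H (play G \<sigma>' x) k)}) \<rparr>"

definition fun_game ::
  "'a set \<Rightarrow> 'y set \<Rightarrow> ('g, 'x, 's, 'y, 'r) ogame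
     \<Rightarrow> ('a \<Rightarrow> 'g, 'a \<times> 'x, 's, 'a \<times> 'y, 'r) ogame" where
  "fun_game A Y H = \<lparr>
     strat = A \<rightarrow>\<^sub>E strat H,
     play = (\<lambda>f (a, x). (a, play H (f a) x)),
     coutil = (\<lambda>f ((a, x), r). coutil H (f a) (x, r)),
     equil = (\<lambda>(a, x) k. {f \<in> A \<rightarrow>\<^sub>E strat H.
                 \<forall>a'\<in>A. f a' \<in> equil H x (\<lambda>y\<in>Y. k (a', y))}) \<rparr>"

end

theory Submission
  imports Defs
begin

(* A strategy of A \<rightarrow> H is an A-indexed family of strategies of H, and play, coutility and
  equilibria of A \<rightarrow> H are computed pointwise in a \<in> A. Hence isomorphisms lift pointwise, and
  for a composite the families of pairs of strategies correspond to pairs of families. The only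
  clause that is not pointwise is the quantification over deviations \<sigma>' of the first player in
  the composite: in (A \<rightarrow> H) \<circ> (A \<rightarrow> G) it ranges over families, but the play at (a, x) only
  reads their value at a, so it is equivalent to ranging over single strategies of G. *)

lemma bij_betw_PiE_compose:
  assumes f: "bij_betw f S T"
  shows "bij_betw (\<lambda>\<phi>. \<lambda>a\<in>A. f (\<phi> a)) (A \<rightarrow>\<^sub>E S) (A \<rightarrow>\<^sub>E T)"
proof (rule bij_betwI[where g="\<lambda>\<psi>. \<lambda>a\<in>A. inv_into S f (\<psi> a)"])
  have f_into: "f s \<in> T" if "s \<in> S" for s
    using f that by (rule bij_betw_apply)
  have g_into: "inv_into S f t \<in> S" if "t \<in> T" for t
    using bij_betw_inv_into[OF f] that by (rule bij_betw_apply)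
  show "(\<lambda>\<phi>. \<lambda>a\<in>A. f (\<phi> a)) \<in> (A \<rightarrow>\<^sub>E S) \<rightarrow> (A \<rightarrow>\<^sub>E T)"
    by (simp add: PiE_iff f_into)
  show "(\<lambda>\<psi>. \<lambda>a\<in>A. inv_into S f (\<psi> a)) \<in> (A \<rightarrow>\<^sub>E T) \<rightarrow> (A \<rightarrow>\<^sub>E S)"
    by (simp add: PiE_iff g_into)
  show "(\<lambda>a\<in>A. inv_into S f ((\<lambda>a\<in>A. f (\<phi> a)) a)) = \<phi>" if "\<phi> \<in> A \<rightarrow>\<^sub>E S" for \<phi>
    using that by (auto simp: bij_betw_inv_into_left[OF f] fun_eq_iff PiE_iff extensional_def)
  show "(\<lambda>a\<in>A. f ((\<lambda>a\<in>A. inv_into S f (\<psi> a)) a)) = \<psi>" if "\<psi> \<in> A \<rightarrow>\<^sub>E T" for \<psi>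
    using that by (auto simp: bij_betw_inv_into_right[OF f] fun_eq_iff PiE_iff extensional_def)
qed

lemma bij_betw_PiE_Times:
  "bij_betw (\<lambda>\<phi>. (\<lambda>a\<in>A. fst (\<phi> a), \<lambda>a\<in>A. snd (\<phi> a)))
     (A \<rightarrow>\<^sub>E (S \<times> T)) ((A \<rightarrow>\<^sub>E S) \<times> (A \<rightarrow>\<^sub>E T))"
  by (rule bij_betw_byWitness[where f'="\<lambda>(p, q). \<lambda>a\<in>A. (p a, q a)"])
     (force simp: PiE_iff fun_eq_iff extensional_def mem_Times_iff)+

lemma ball_PiE_eval:
  assumes "a \<in> A"
  shows "(\<forall>\<sigma>\<in>A \<rightarrow>\<^sub>E S. P (\<sigma> a)) \<longleftrightarrow> (\<forall>s\<in>S. P s)"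
proof
  assume P: "\<forall>\<sigma>\<in>A \<rightarrow>\<^sub>E S. P (\<sigma> a)"
  show "\<forall>s\<in>S. P s"
  proof
    fix s assume "s \<in> S"
    then have "(\<lambda>_\<in>A. s) \<in> A \<rightarrow>\<^sub>E S" by simp
    with P assms show "P s" by fastforce
  qed
next
  assume "\<forall>s\<in>S. P s"
  then show "\<forall>\<sigma>\<in>A \<rightarrow>\<^sub>E S. P (\<sigma> a)"
    using assms by (blast dest: PiE_mem)
qed

lemma game_isoI:
  assumes "bij_betw f (strat G) (strat H)"
    and "\<And>\<sigma> x. \<sigma> \<in> strat G \<Longrightarrow> x \<in> X \<Longrightarrow> play H (f \<sigma>) x = play G \<sigma> x"
    and "\<And>\<sigma> x r. \<sigma> \<in> strat G \<Longrightarrow> x \<in> X \<Longrightarrow> r \<in> R \<Longrightarrow> coutil H (f \<sigma>) (x, r) = coutil G \<sigma> (x, r)"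
    and "\<And>\<sigma> x k. \<sigma> \<in> strat G \<Longrightarrow> x \<in> X \<Longrightarrow> k \<in> Y \<rightarrow>\<^sub>E R \<Longrightarrow>
      \<sigma> \<in> equil G x k \<longleftrightarrow> f \<sigma> \<in> equil H x k"
  shows "game_iso X Y R G H"
  unfolding game_iso_def using assms by blast

lemma game_isoE:
  assumes "game_iso X Y R G H"
  obtains f where "bij_betw f (strat G) (strat H)"
    and "\<And>\<sigma> x. \<sigma> \<in> strat G \<Longrightarrow> x \<in> X \<Longrightarrow> play H (f \<sigma>) x = play G \<sigma> x"
    and "\<And>\<sigma> x r. \<sigma> \<in> strat G \<Longrightarrow> x \<in> X \<Longrightarrow> r \<in> R \<Longrightarrow> coutil H (f \<sigma>) (x, r) = coutil G \<sigma> (x, r)"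
    and "\<And>\<sigma> x k. \<sigma> \<in> strat G \<Longrightarrow> x \<in> X \<Longrightarrow> k \<in> Y \<rightarrow>\<^sub>E R \<Longrightarrow>
      \<sigma> \<in> equil G x k \<longleftrightarrow> f \<sigma> \<in> equil H x k"
proof -
  from assms obtain f where "bij_betw f (strat G) (strat H)"
    and "\<forall>\<sigma>\<in>strat G. (\<forall>x\<in>X. play H (f \<sigma>) x = play G \<sigma> x) \<and>
      (\<forall>x\<in>X. \<forall>r\<in>R. coutil H (f \<sigma>) (x, r) = coutil G \<sigma> (x, r)) \<and>
      (\<forall>x\<in>X. \<forall>k\<in>Y \<rightarrow>\<^sub>E R. \<sigma> \<in> equil G x k \<longleftrightarrow> f \<sigma> \<in> equil H x k)"
    unfolding game_iso_def by blast
  then show thesis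
    by (intro that) auto
qed

lemma strat_fun_game [simp]: "strat (fun_game A Y H) = A \<rightarrow>\<^sub>E strat H"
  and play_fun_game [simp]: "play (fun_game A Y H) f (a, x) = (a, play H (f a) x)"
  and coutil_fun_game [simp]: "coutil (fun_game A Y H) f ((a, x), r) = coutil H (f a) (x, r)"
  by (simp_all add: fun_game_def)

lemma equil_fun_game_iff:
  "f \<in> equil (fun_game A Y H) (a, x) k \<longleftrightarrow>
    f \<in> A \<rightarrow>\<^sub>E strat H \<and> (\<forall>a'\<in>A. f a' \<in> equil H x (\<lambda>y\<in>Y. k (a', y)))"
  by (simp add: fun_game_def)

lemma strat_comp_game [simp]: "strat (comp_game Y G H) = strat G \<times> strat H"
  and play_comp_game [simp]: "play (comp_game Y G H) p x = play H (snd p) (play G (fst p) x)"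
  and coutil_comp_game [simp]:
    "coutil (comp_game Y G H) p (x, q) = coutil G (fst p) (x, coutil H (snd p) (play G (fst p) x, q))"
  by (simp_all add: comp_game_def split_beta)

lemma equil_comp_game_iff:
  "p \<in> equil (comp_game Y G H) x k \<longleftrightarrow>
    fst p \<in> strat G \<and> snd p \<in> strat H \<and>
    fst p \<in> equil G x (\<lambda>y\<in>Y. coutil H (snd p) (y, k (play H (snd p) y))) \<and>
    (\<forall>\<sigma>\<in>strat G. snd p \<in> equil H (play G \<sigma> x) k)"
  by (cases p) (simp add: comp_game_def)

lemma is_open_game_fun_game:
  "is_open_game X S Y R H \<Longrightarrow> is_open_game (A \<times> X) S (A \<times> Y) R (fun_game A Y H)"
  unfolding is_open_game_def by (auto simp: equil_fun_game_iff PiE_iff extensional_def)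

lemma game_iso_fun_game:
  assumes "game_iso X Y R G G'"
  shows "game_iso (A \<times> X) (A \<times> Y) R (fun_game A Y G) (fun_game A Y G')"
proof -
  obtain f where f: "bij_betw f (strat G) (strat G')"
    and play: "\<And>\<sigma> x. \<sigma> \<in> strat G \<Longrightarrow> x \<in> X \<Longrightarrow> play G' (f \<sigma>) x = play G \<sigma> x"
    and coutil: "\<And>\<sigma> x r. \<sigma> \<in> strat G \<Longrightarrow> x \<in> X \<Longrightarrow> r \<in> R \<Longrightarrow>
      coutil G' (f \<sigma>) (x, r) = coutil G \<sigma> (x, r)"
    and equil: "\<And>\<sigma> x k. \<sigma> \<in> strat G \<Longrightarrow> x \<in> X \<Longrightarrow> k \<in> Y \<rightarrow>\<^sub>E R \<Longrightarrow>
      \<sigma> \<in> equil G x k \<longleftrightarrow> f \<sigma> \<in> equil G' x k"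
    using assms by (elim game_isoE) fast
  have into: "f s \<in> strat G'" if "s \<in> strat G" for s
    using f that by (rule bij_betw_apply)
  have slice: "(\<lambda>y\<in>Y. k (a, y)) \<in> Y \<rightarrow>\<^sub>E R" if "k \<in> A \<times> Y \<rightarrow>\<^sub>E R" "a \<in> A" for k a
    using that by auto
  show ?thesis
  proof (rule game_isoI[where f="\<lambda>\<phi>. \<lambda>a\<in>A. f (\<phi> a)"])
    show "bij_betw (\<lambda>\<phi>. \<lambda>a\<in>A. f (\<phi> a)) (strat (fun_game A Y G)) (strat (fun_game A Y G'))"
      using f by (simp add: bij_betw_PiE_compose)
  qed (auto simp: equil_fun_game_iff PiE_iff play coutil equil into slice)
qed

lemma game_iso_fun_game_id_game:
  "game_iso (A \<times> X) (A \<times> X) S (fun_game A X id_game) id_game"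
proof (rule game_isoI[where f="\<lambda>_. ()"])
  have "A \<rightarrow>\<^sub>E {()} = {\<lambda>a\<in>A. ()}"
    by (auto simp: PiE_iff fun_eq_iff)
  then show "bij_betw (\<lambda>_. ()) (strat (fun_game A X id_game)) (strat id_game)"
    by (simp add: id_game_def bij_betw_def)
qed (auto simp: id_game_def equil_fun_game_iff PiE_iff)

lemma equil_fun_game_comp_game_iff:
  assumes H: "is_open_game Y R Z Q H"
    and \<phi>: "\<phi> \<in> A \<rightarrow>\<^sub>E (strat G \<times> strat H)"
  shows "\<phi> \<in> equil (fun_game A Z (comp_game Y G H)) (a, x) k \<longleftrightarrow>
    (\<forall>a'\<in>A. fst (\<phi> a') \<in> equil G x (\<lambda>y\<in>Y. coutil H (snd (\<phi> a')) (y, k (a', play H (snd (\<phi> a')) y))) \<and>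
      (\<forall>s\<in>strat G. snd (\<phi> a') \<in> equil H (play G s x) (\<lambda>z\<in>Z. k (a', z))))"
    (is "_ \<longleftrightarrow> ?rhs")
proof -
  have strat: "fst (\<phi> a') \<in> strat G" "snd (\<phi> a') \<in> strat H" if "a' \<in> A" for a'
    using PiE_mem[OF \<phi> that] by (simp_all add: mem_Times_iff)
  \<comment> \<open>openness of H makes the restriction of \<open>k (a', _)\<close> to Z harmless\<close>
  have play: "play H (snd (\<phi> a')) y \<in> Z" if "a' \<in> A" "y \<in> Y" for a' y
    using H strat(2) that by (simp add: is_open_game_def)
  have "\<phi> \<in> equil (fun_game A Z (comp_game Y G H)) (a, x) k \<longleftrightarrow>
      (\<forall>a'\<in>A. \<phi> a' \<in> equil (comp_game Y G H) x (\<lambda>z\<in>Z. k (a', z)))"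
    using \<phi> by (simp add: equil_fun_game_iff)
  also have "\<dots> \<longleftrightarrow> ?rhs"
    by (intro ball_cong) (simp_all add: equil_comp_game_iff strat play cong: restrict_cong)
  finally show ?thesis .
qed

lemma equil_comp_game_fun_game_iff:
  assumes "a \<in> A" and "p1 \<in> A \<rightarrow>\<^sub>E strat G" and "p2 \<in> A \<rightarrow>\<^sub>E strat H"
  shows "(p1, p2) \<in> equil (comp_game (A \<times> Y) (fun_game A Y G) (fun_game A Z H)) (a, x) k \<longleftrightarrow>
    (\<forall>a'\<in>A. p1 a' \<in> equil G x (\<lambda>y\<in>Y. coutil H (p2 a') (y, k (a', play H (p2 a') y)))) \<and>
    (\<forall>s\<in>strat G. \<forall>a'\<in>A. p2 a' \<in> equil H (play G s x) (\<lambda>z\<in>Z. k (a', z)))"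
proof -
  have "(\<forall>\<sigma>\<in>A \<rightarrow>\<^sub>E strat G. \<forall>a'\<in>A. p2 a' \<in> equil H (play G (\<sigma> a) x) (\<lambda>z\<in>Z. k (a', z)))
    \<longleftrightarrow> (\<forall>s\<in>strat G. \<forall>a'\<in>A. p2 a' \<in> equil H (play G s x) (\<lambda>z\<in>Z. k (a', z)))"
    using \<open>a \<in> A\<close> by (rule ball_PiE_eval)
  with assms(2,3) show ?thesis
    by (simp add: equil_comp_game_iff equil_fun_game_iff cong: restrict_cong)
qed

lemma game_iso_fun_game_comp_game:
  assumes H: "is_open_game Y R Z Q H"
  shows "game_iso (A \<times> X) (A \<times> Z) Q (fun_game A Z (comp_game Y G H))
    (comp_game (A \<times> Y) (fun_game A Y G) (fun_game A Z H))"
proof (rule game_isoI[where f="\<lambda>\<phi>. (\<lambda>a\<in>A. fst (\<phi> a), \<lambda>a\<in>A. snd (\<phi> a))"])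
  show "bij_betw (\<lambda>\<phi>. (\<lambda>a\<in>A. fst (\<phi> a), \<lambda>a\<in>A. snd (\<phi> a)))
    (strat (fun_game A Z (comp_game Y G H))) (strat (comp_game (A \<times> Y) (fun_game A Y G) (fun_game A Z H)))"
    by (simp add: bij_betw_PiE_Times)
next
  fix \<phi> ax k
  assume \<phi>: "\<phi> \<in> strat (fun_game A Z (comp_game Y G H))" and "ax \<in> A \<times> X"
  then obtain a x where ax: "ax = (a, x)" "a \<in> A" by blast
  from \<phi> have \<phi>': "\<phi> \<in> A \<rightarrow>\<^sub>E (strat G \<times> strat H)" by simp
  then have p1: "(\<lambda>a\<in>A. fst (\<phi> a)) \<in> A \<rightarrow>\<^sub>E strat G"
    and p2: "(\<lambda>a\<in>A. snd (\<phi> a)) \<in> A \<rightarrow>\<^sub>E strat H"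
    by (auto simp: PiE_iff mem_Times_iff)
  show "\<phi> \<in> equil (fun_game A Z (comp_game Y G H)) ax k \<longleftrightarrow>
    (\<lambda>a\<in>A. fst (\<phi> a), \<lambda>a\<in>A. snd (\<phi> a)) \<in> equil (comp_game (A \<times> Y) (fun_game A Y G) (fun_game A Z H)) ax k"
    unfolding ax equil_fun_game_comp_game_iff[OF H \<phi>'] equil_comp_game_fun_game_iff[OF \<open>a \<in> A\<close> p1 p2]
    by auto
qed auto

theorem lemma4:
  fixes A :: "'a set"
  shows
   "(\<forall>X S Y R (H :: ('g, 'x, 's, 'y, 'r) ogame).
       is_open_game X S Y R H \<longrightarrow> is_open_game (A \<times> X) S (A \<times> Y) R (fun_game A Y H)) \<and>
    (\<forall>X Y R (G :: ('g1, 'x1, 's1, 'y1, 'r1) ogame) (G' :: ('g2, 'x1, 's1, 'y1, 'r1) ogame).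
       game_iso X Y R G G' \<longrightarrow> game_iso (A \<times> X) (A \<times> Y) R (fun_game A Y G) (fun_game A Y G')) \<and>
    (\<forall>(X :: 'x3 set) (S :: 's3 set).
       game_iso (A \<times> X) (A \<times> X) S (fun_game A X id_game) id_game) \<and>
    (\<forall>X S Y R Z Q (G :: ('g4, 'x4, 's4, 'y4, 'r4) ogame) (H :: ('h4, 'y4, 'r4, 'z4, 'q4) ogame).
       is_open_game X S Y R G \<longrightarrow> is_open_game Y R Z Q H \<longrightarrow>
       game_iso (A \<times> X) (A \<times> Z) Q (fun_game A Z (comp_game Y G H))
                (comp_game (A \<times> Y) (fun_game A Y G) (fun_game A Z H)))"
  by (simp add: is_open_game_fun_game game_iso_fun_game game_iso_fun_game_id_game
      game_iso_fun_game_comp_game)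

end
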